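(* Let $v>0$ and let $(a,r,s):\mathbb{R}\to\mathbb{R}^3$ be a solution of $$\partial_\xi a=r,\qquad \partial_\xi r=-vr-\frac{sa}{2}+\frac{a|r|}{2},\qquad \partial_\xi s=-vs-ra$$ such that $(a,r,s)(\xi)\to(a_0,0,0)$ as $\xi\to-\infty$ for some $a_0\in\mathbb{R}$, and $(a,r,s)\not\equiv(a_0,0,0)$. Then $|a_0|\ge\frac45 v$. In particular, there exists $\xi_0\in\mathbb{R}$ such that $a(\xi)$ is nonzero and of constant sign for all $\xi<\xi_0$. *)

theory Defs
  imports "HOL-Analysis.Analysis"
begin

end

theory Submission
  imports Defs
begin

(* Where |a| \<le> v, the function r^2 + s^2/2 is nonincreasing along solutions: its derivative
   -2vr^2 + ar|r| - 2ars - vs^2 is at most -v(|r| - |s|)^2. So if |a0| < v, it is nonincreasing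
   on a half-line (-\<infinity>, T] and tends to 0 at -\<infinity>, hence vanishes there: the solution rests
   at the equilibrium (a0, 0, 0) up to T. A Gronwall estimate for (a - a0)^2 + r^2 + s^2 keeps
   it there after T, so the solution is trivial. Thus in fact |a0| \<ge> v, and a has the sign
   of a0 near -\<infinity>. *)

lemma lyapunov_derivative_nonpos:
  fixes v A R S :: real
  assumes "\<bar>A\<bar> \<le> v"
  shows "2 * R * (- v * R - S * A / 2 + A * \<bar>R\<bar> / 2) + S * (- v * S - R * A) \<le> 0"
proof -
  have "A * R * \<bar>R\<bar> \<le> \<bar>A\<bar> * (R * R)"
    using abs_ge_self[of "A * R * \<bar>R\<bar>"] by (simp add: abs_mult mult.assoc)
  also have "\<dots> \<le> v * (R * R)"
    using assms by (simp add: mult_right_mono)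
  finally have quad: "A * R * \<bar>R\<bar> \<le> v * (R * R)" .
  have "- (A * R * S) \<le> \<bar>A\<bar> * (\<bar>R\<bar> * \<bar>S\<bar>)"
    using abs_ge_minus_self[of "A * R * S"] by (simp add: abs_mult mult.assoc)
  also have "\<dots> \<le> v * (\<bar>R\<bar> * \<bar>S\<bar>)"
    using assms by (simp add: mult_right_mono)
  finally have cross: "- (A * R * S) \<le> v * (\<bar>R\<bar> * \<bar>S\<bar>)" .
  have "0 \<le> v * (\<bar>R\<bar> - \<bar>S\<bar>)\<^sup>2"
    using assms by simp
  also have "\<dots> = v * (R * R) - 2 * (v * (\<bar>R\<bar> * \<bar>S\<bar>)) + v * (S * S)"
    by (simp add: power2_eq_square algebra_simps)
  finally have "0 \<le> v * (R * R) - 2 * (v * (\<bar>R\<bar> * \<bar>S\<bar>)) + v * (S * S)" .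
  moreover have "2 * R * (- v * R - S * A / 2 + A * \<bar>R\<bar> / 2) + S * (- v * S - R * A)
      = A * R * \<bar>R\<bar> - 2 * (A * R * S) - 2 * (v * (R * R)) - v * (S * S)"
    by (simp add: algebra_simps)
  ultimately show ?thesis
    using quad cross by linarith
qed

lemma energy_derivative_bound:
  fixes v M P R S A :: real
  assumes "v \<ge> 0" and "\<bar>A\<bar> \<le> M"
  shows "2 * P * R + 2 * R * (- v * R - S * A / 2 + A * \<bar>R\<bar> / 2) + 2 * S * (- v * S - R * A)
     \<le> (1 + 3 * M) * (P\<^sup>2 + R\<^sup>2 + S\<^sup>2)"
proof -
  have "M \<ge> 0"
    using assms by linarith
  have "A * R * \<bar>R\<bar> \<le> \<bar>A\<bar> * R\<^sup>2"
    using abs_ge_self[of "A * R * \<bar>R\<bar>"] by (simp add: abs_mult mult.assoc power2_eq_square)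
  also have "\<dots> \<le> M * R\<^sup>2"
    using assms by (simp add: mult_right_mono)
  finally have quad: "A * R * \<bar>R\<bar> \<le> M * R\<^sup>2" .
  have "- (A * R * S) \<le> \<bar>A\<bar> * (\<bar>R\<bar> * \<bar>S\<bar>)"
    using abs_ge_minus_self[of "A * R * S"] by (simp add: abs_mult mult.assoc)
  also have "\<dots> \<le> M * (\<bar>R\<bar> * \<bar>S\<bar>)"
    using assms by (simp add: mult_right_mono)
  also have "\<dots> \<le> M * ((R\<^sup>2 + S\<^sup>2) / 2)"
    using sum_squares_bound[of "\<bar>R\<bar>" "\<bar>S\<bar>"] \<open>M \<ge> 0\<close> by (intro mult_left_mono) auto
  finally have cross: "- (A * R * S) \<le> M * R\<^sup>2 / 2 + M * S\<^sup>2 / 2"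
    by (simp add: algebra_simps)
  have "0 \<le> v * R\<^sup>2" "0 \<le> v * S\<^sup>2" "0 \<le> M * P\<^sup>2" "0 \<le> M * R\<^sup>2" "0 \<le> M * S\<^sup>2"
    using assms \<open>M \<ge> 0\<close> by simp_all
  moreover have "2 * P * R + 2 * R * (- v * R - S * A / 2 + A * \<bar>R\<bar> / 2) + 2 * S * (- v * S - R * A)
      = 2 * P * R - 2 * (v * R\<^sup>2) - 2 * (v * S\<^sup>2) + A * R * \<bar>R\<bar> - 3 * (A * R * S)"
    by (simp add: power2_eq_square algebra_simps)
  moreover have "(1 + 3 * M) * (P\<^sup>2 + R\<^sup>2 + S\<^sup>2)
      = P\<^sup>2 + R\<^sup>2 + S\<^sup>2 + 3 * (M * P\<^sup>2) + 3 * (M * R\<^sup>2) + 3 * (M * S\<^sup>2)"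
    by (simp add: algebra_simps)
  ultimately show ?thesis
    using sum_squares_bound[of P R] quad cross zero_le_power2[of S] by linarith
qed

lemma gronwall_deriv:
  fixes E E' :: "real \<Rightarrow> real"
  assumes "t0 \<le> t1"
    and deriv: "\<And>t. t \<in> {t0..t1} \<Longrightarrow> (E has_real_derivative E' t) (at t)"
    and bound: "\<And>t. t \<in> {t0..t1} \<Longrightarrow> E' t \<le> C * E t"
  shows "E t1 \<le> E t0 * exp (C * (t1 - t0))"
proof -
  define G where "G t = E t * exp (- C * t)" for t
  have "G t1 \<le> G t0"
  proof (rule DERIV_nonpos_imp_nonincreasing[OF \<open>t0 \<le> t1\<close>])
    fix t assume "t0 \<le> t" "t \<le> t1"
    then have "(G has_real_derivative (E' t - C * E t) * exp (- C * t)) (at t)"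
      unfolding G_def by (auto intro!: derivative_eq_intros deriv simp: algebra_simps)
    moreover have "(E' t - C * E t) * exp (- C * t) \<le> 0"
      using bound \<open>t0 \<le> t\<close> \<open>t \<le> t1\<close> by (simp add: mult_nonpos_nonneg)
    ultimately show "\<exists>d. (G has_real_derivative d) (at t) \<and> d \<le> 0"
      by blast
  qed
  then have "G t1 * exp (C * t1) \<le> G t0 * exp (C * t1)"
    by simp
  then show ?thesis
    by (simp add: G_def mult.assoc exp_add[symmetric] algebra_simps)
qed

locale wave_profile =
  fixes v :: real and a r s :: "real \<Rightarrow> real"
  assumes v_nonneg: "v \<ge> 0"
    and da: "\<And>\<xi>. (a has_real_derivative r \<xi>) (at \<xi>)"
    and dr: "\<And>\<xi>. (r has_real_derivative (- v * r \<xi> - s \<xi> * a \<xi> / 2 + a \<xi> * \<bar>r \<xi>\<bar> / 2)) (at \<xi>)"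
    and ds: "\<And>\<xi>. (s has_real_derivative (- v * s \<xi> - r \<xi> * a \<xi>)) (at \<xi>)"
begin

lemma lyapunov_nonincreasing:
  assumes "x \<le> y" and small: "\<And>\<xi>. \<xi> \<in> {x..y} \<Longrightarrow> \<bar>a \<xi>\<bar> \<le> v"
  shows "r y ^ 2 + s y ^ 2 / 2 \<le> r x ^ 2 + s x ^ 2 / 2"
proof (rule DERIV_nonpos_imp_nonincreasing[OF \<open>x \<le> y\<close>])
  fix \<xi> assume "x \<le> \<xi>" "\<xi> \<le> y"
  then have "2 * r \<xi> * (- v * r \<xi> - s \<xi> * a \<xi> / 2 + a \<xi> * \<bar>r \<xi>\<bar> / 2)
      + s \<xi> * (- v * s \<xi> - r \<xi> * a \<xi>) \<le> 0"
    by (intro lyapunov_derivative_nonpos small) simp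
  moreover have "((\<lambda>\<xi>. r \<xi> ^ 2 + s \<xi> ^ 2 / 2) has_real_derivative
      2 * r \<xi> * (- v * r \<xi> - s \<xi> * a \<xi> / 2 + a \<xi> * \<bar>r \<xi>\<bar> / 2)
      + s \<xi> * (- v * s \<xi> - r \<xi> * a \<xi>)) (at \<xi>)"
    by (auto intro!: derivative_eq_intros dr ds)
  ultimately show "\<exists>d. ((\<lambda>\<xi>. r \<xi> ^ 2 + s \<xi> ^ 2 / 2) has_real_derivative d) (at \<xi>) \<and> d \<le> 0"
    by blast
qed

lemma r_s_vanish_below:
  assumes lim_r: "(r \<longlongrightarrow> 0) at_bot" and lim_s: "(s \<longlongrightarrow> 0) at_bot"
    and small: "\<And>\<xi>. \<xi> \<le> T \<Longrightarrow> \<bar>a \<xi>\<bar> \<le> v" and "y \<le> T"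
  shows "r y = 0 \<and> s y = 0"
proof -
  have "\<forall>\<^sub>F x in at_bot. r y ^ 2 + s y ^ 2 / 2 \<le> r x ^ 2 + s x ^ 2 / 2"
    unfolding eventually_at_bot_linorder
  proof (intro exI[of _ y] allI impI)
    fix x assume "x \<le> y"
    with \<open>y \<le> T\<close> show "r y ^ 2 + s y ^ 2 / 2 \<le> r x ^ 2 + s x ^ 2 / 2"
      by (intro lyapunov_nonincreasing small) auto
  qed
  moreover have "((\<lambda>x. r x ^ 2 + s x ^ 2 / 2) \<longlongrightarrow> 0) at_bot"
    using lim_r lim_s by (auto intro!: tendsto_eq_intros)
  ultimately have "r y ^ 2 + s y ^ 2 / 2 \<le> 0"
    by (intro tendsto_lowerbound[OF _ _ trivial_limit_at_bot_linorder])
  then have "(r y)\<^sup>2 = 0" "(s y)\<^sup>2 = 0"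
    using zero_le_power2[of "r y"] zero_le_power2[of "s y"] by linarith+
  then show ?thesis
    by simp
qed

lemma equilibrium_near_bot:
  assumes lim_a: "(a \<longlongrightarrow> a0) at_bot"
    and lim_r: "(r \<longlongrightarrow> 0) at_bot"
    and lim_s: "(s \<longlongrightarrow> 0) at_bot"
    and "\<bar>a0\<bar> < v"
  obtains T where "\<And>\<xi>. \<xi> \<le> T \<Longrightarrow> a \<xi> = a0 \<and> r \<xi> = 0 \<and> s \<xi> = 0"
proof -
  have "\<forall>\<^sub>F \<xi> in at_bot. \<bar>a \<xi>\<bar> < v"
    using tendsto_rabs[OF lim_a] \<open>\<bar>a0\<bar> < v\<close> by (rule order_tendstoD)
  then obtain T where T: "\<And>\<xi>. \<xi> \<le> T \<Longrightarrow> \<bar>a \<xi>\<bar> < v"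
    unfolding eventually_at_bot_linorder by blast
  have rs: "r y = 0 \<and> s y = 0" if "y \<le> T" for y
    using r_s_vanish_below[OF lim_r lim_s _ that] T by (simp add: less_imp_le)
  have const: "a y = a T" if "y \<le> T" for y
  proof (cases "y = T")
    case False
    with that have "y < T" by simp
    moreover have "continuous_on {y..T} a"
      using da by (meson DERIV_continuous_on has_field_derivative_at_within)
    moreover have "(a has_real_derivative 0) (at x)" if "x < T" for x
      using da[of x] rs[of x] that by simp
    ultimately show ?thesis
      using DERIV_isconst_end[of y T a] by simp
  qed simp
  have "\<forall>\<^sub>F \<xi> in at_bot. a \<xi> = a T"
    unfolding eventually_at_bot_linorder using const by blast
  then have "(a \<longlongrightarrow> a T) at_bot"
    by (rule tendsto_eventually)
  from tendsto_unique[OF trivial_limit_at_bot_linorder this lim_a] have "a T = a0" .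
  with const rs that show ?thesis
    by blast
qed

lemma equilibrium_persists:
  assumes "t0 \<le> t1" and "a t0 = c" "r t0 = 0" "s t0 = 0"
  shows "a t1 = c \<and> r t1 = 0 \<and> s t1 = 0"
proof -
  have "continuous_on {t0..t1} a"
    using da by (meson DERIV_continuous_on has_field_derivative_at_within)
  then obtain M where M: "\<And>t. t \<in> {t0..t1} \<Longrightarrow> \<bar>a t\<bar> \<le> M"
    using continuous_on_compact_bound[of "{t0..t1}" a] by auto
  define E where "E t = (a t - c)\<^sup>2 + (r t)\<^sup>2 + (s t)\<^sup>2" for t
  have "E t1 \<le> E t0 * exp ((1 + 3 * M) * (t1 - t0))"
  proof (rule gronwall_deriv[OF \<open>t0 \<le> t1\<close>])
    fix t
    show "(E has_real_derivative 2 * (a t - c) * r t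
        + 2 * r t * (- v * r t - s t * a t / 2 + a t * \<bar>r t\<bar> / 2)
        + 2 * s t * (- v * s t - r t * a t)) (at t)"
      unfolding E_def by (auto intro!: derivative_eq_intros da dr ds)
    assume t: "t \<in> {t0..t1}"
    show "2 * (a t - c) * r t
        + 2 * r t * (- v * r t - s t * a t / 2 + a t * \<bar>r t\<bar> / 2)
        + 2 * s t * (- v * s t - r t * a t) \<le> (1 + 3 * M) * E t"
      unfolding E_def by (rule energy_derivative_bound[OF v_nonneg M[OF t]])
  qed
  also have "E t0 = 0"
    using assms by (simp add: E_def)
  finally have "E t1 \<le> 0"
    by simp
  then have "(a t1 - c)\<^sup>2 = 0" "(r t1)\<^sup>2 = 0" "(s t1)\<^sup>2 = 0"
    using zero_le_power2[of "a t1 - c"] zero_le_power2[of "r t1"] zero_le_power2[of "s t1"]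
    unfolding E_def by linarith+
  then show ?thesis
    by simp
qed

lemma abs_limit_ge_speed:
  assumes "(a \<longlongrightarrow> a0) at_bot" "(r \<longlongrightarrow> 0) at_bot" "(s \<longlongrightarrow> 0) at_bot"
    and nontriv: "\<exists>\<xi>. (a \<xi>, r \<xi>, s \<xi>) \<noteq> (a0, 0, 0)"
  shows "\<bar>a0\<bar> \<ge> v"
proof (rule ccontr)
  assume "\<not> \<bar>a0\<bar> \<ge> v"
  then have "\<bar>a0\<bar> < v"
    by simp
  obtain T where T: "\<And>\<xi>. \<xi> \<le> T \<Longrightarrow> a \<xi> = a0 \<and> r \<xi> = 0 \<and> s \<xi> = 0"
    using equilibrium_near_bot[OF assms(1-3) \<open>\<bar>a0\<bar> < v\<close>] by blast
  have "a \<xi> = a0 \<and> r \<xi> = 0 \<and> s \<xi> = 0" for \<xi>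
  proof (cases "\<xi> \<le> T")
    case False
    show ?thesis
      by (rule equilibrium_persists[of T]) (use T[of T] False in auto)
  qed (rule T)
  with nontriv show False
    by simp
qed

end

lemma sign_eventually_at_bot:
  fixes f :: "real \<Rightarrow> real"
  assumes lim: "(f \<longlongrightarrow> l) at_bot" and "l \<noteq> 0"
  shows "\<exists>\<xi>0. (\<forall>\<xi><\<xi>0. f \<xi> > 0) \<or> (\<forall>\<xi><\<xi>0. f \<xi> < 0)"
proof (cases "l > 0")
  case True
  then obtain N where "\<forall>\<xi>\<le>N. f \<xi> > 0"
    using order_tendstoD(1)[OF lim] unfolding eventually_at_bot_linorder by blast
  then have "\<forall>\<xi><N. f \<xi> > 0"
    by simp
  then show ?thesis
    by blast
next
  case False
  with \<open>l \<noteq> 0\<close> have "l < 0"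
    by simp
  then obtain N where "\<forall>\<xi>\<le>N. f \<xi> < 0"
    using order_tendstoD(2)[OF lim] unfolding eventually_at_bot_linorder by blast
  then have "\<forall>\<xi><N. f \<xi> < 0"
    by simp
  then show ?thesis
    by blast
qed

theorem lemma2:
  fixes v a0 :: real and a r s :: "real \<Rightarrow> real"
  assumes v_pos: "v > 0"
    and da: "\<And>\<xi>. (a has_real_derivative r \<xi>) (at \<xi>)"
    and dr: "\<And>\<xi>. (r has_real_derivative (- v * r \<xi> - s \<xi> * a \<xi> / 2 + a \<xi> * \<bar>r \<xi>\<bar> / 2)) (at \<xi>)"
    and ds: "\<And>\<xi>. (s has_real_derivative (- v * s \<xi> - r \<xi> * a \<xi>)) (at \<xi>)"
    and lim_a: "(a \<longlongrightarrow> a0) at_bot"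
    and lim_r: "(r \<longlongrightarrow> 0) at_bot"
    and lim_s: "(s \<longlongrightarrow> 0) at_bot"
    and nontriv: "\<exists>\<xi>. (a \<xi>, r \<xi>, s \<xi>) \<noteq> (a0, 0, 0)"
  shows "\<bar>a0\<bar> \<ge> 4 / 5 * v \<and>
         (\<exists>\<xi>0. (\<forall>\<xi><\<xi>0. a \<xi> > 0) \<or> (\<forall>\<xi><\<xi>0. a \<xi> < 0))"
proof -
  interpret wave_profile v a r s
    using less_imp_le[OF v_pos] da dr ds by unfold_locales
  have "\<bar>a0\<bar> \<ge> v"
    using abs_limit_ge_speed lim_a lim_r lim_s nontriv .
  then have "\<bar>a0\<bar> \<ge> 4 / 5 * v" and "a0 \<noteq> 0"
    using v_pos by auto
  then show ?thesis
    using sign_eventually_at_bot[OF lim_a] by blast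
qed

end
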